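(* Assume (A1)–(A4). For every geometric covering interval $J=[i,j]\in\mathcal{I}$ with $j\le T$, POLA satisfies $$\sum_{u=i}^jf_u(\mathbf{x}_u)-\min_{\mathbf{x}\in\mathcal{K}}\sum_{u=i}^jf_u(\mathbf{x})\le\sqrt{3c(j)}\,|J|^{1/2}+\Big(\sqrt3G+\frac74D^2+\frac12G^2\Big)|J|^{3/4},$$ where $c(j)\le1+\ln j+\ln(1+\log_2j)+\ln\frac{5+3\ln(1+j)}{2}$.
   Context: Online convex optimization: for rounds $t=1,\dots,T$ a learner chooses $\mathbf{x}_t\in\mathcal{K}$, then a loss $f_t:\mathcal{K}\to\mathbb{R}$ is revealed (chosen adversarially), the learner suffers $f_t(\mathbf{x}_t)$ and can access $f_t$. Standing assumptions: (A1) $\mathcal{K}\subseteq\mathbb{R}^d$ is convex and compact, contains $\mathbf{0}$, and $\mathcal{K}\subseteq R\mathcal{B}$ where $R\mathcal{B}$ is the closed Euclidean ball of radius $R$ centered at $\mathbf{0}$; set $D=2R$, so $\|\mathbf{x}-\mathbf{x}'\|_2\le D$ for all $\mathbf{x},\mathbf{x}'\in\mathcal{K}$. (A2) Each $f_t$ is $G$-Lipschitz on $\mathcal{K}$, and its (sub)gradients satisfy $\|\nabla f_t(\mathbf{x})\|_2\le G$. (A3) Each $f_t$ is convex on $\mathcal{K}$: $f_t(\mathbf{y})\ge f_t(\mathbf{x})+\nabla f_t(\mathbf{x})^\top(\mathbf{y}-\mathbf{x})$. (A4) $0\le f_t(\mathbf{x})\le1$ for all $\mathbf{x}\in\mathcal{K}$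 and all $t$. Infeasible projection oracle $\mathcal{O}_{\mathrm{IP}}(\mathcal{K},\epsilon,\mathbf{x}_0,\mathbf{y}_0)$: given $\epsilon>0$, $\mathbf{x}_0\in\mathcal{K}$, $\mathbf{y}_0\in\mathbb{R}^d$, returns $(\mathbf{x},\tilde{\mathbf{y}})\in\mathcal{K}\times R\mathcal{B}$ with $\|\mathbf{x}-\tilde{\mathbf{y}}\|_2\le\sqrt{3\epsilon}$ and $\|\tilde{\mathbf{y}}-\mathbf{z}\|_2\le\|\mathbf{y}_0-\mathbf{z}\|_2$ for all $\mathbf{z}\in\mathcal{K}$. Algorithm $\mathrm{BOGD}_{\mathrm{IP}}$ (step size $\eta$, block size $K$, tolerance $\epsilon$): pick $\mathbf{x}_1\in\mathcal{K}$ arbitrary, $\tilde{\mathbf{y}}_1=\mathbf{x}_1$. Rounds are split into blocks; block $m$ consists of rounds $(m-1)K+1,\dots,mK$. At every round $t$ of block $m$ the algorithm plays $\mathbf{x}_t=\mathbf{x}_m$. At the last round of block $m$ it sets $\mathbf{y}_{m+1}=\tilde{\mathbf{y}}_m-\eta\sum_{r=(m-1)K+1}^{mK}\nabla f_r(\mathbf{x}_m)$ and $(\mathbf{x}_{m+1},\tilde{\mathbf{y}}_{m+1})=\mathcal{O}_{\mathrm{IP}}(\mathcal{K},\epsilon,\mathbf{x}_m,\mathbf{y}_{m+1})$. Unless stated otherwise, it is run with $K=\eta^{-2/3}$ and $\epsilon=\eta^{2/3}$ (block sizes assumed integral). Geometric covering (GC) intervals: $\mathcal{I}=\bigcup_{k\ge0}\mathcal{I}_k$,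 $\mathcal{I}_k=\{[i\cdot2^k,(i+1)\cdot2^k-1]: i\in\{1,2,\dots\}\}$ (intervals of integers). Algorithm POLA: $\Phi(R,C)=\exp([R]_+^2/(3C))$ with $[x]_+=\max(0,x)$ and $\Phi(0,0)=1$; $w(R,C)=\frac12(\Phi(R+1,C+1)-\Phi(R-1,C+1))$. At each round $t$, for every $I\in\mathcal{I}$ whose first round is $t$, create expert $E_I$: an instance of $\mathrm{BOGD}_{\mathrm{IP}}$ started at round $t$ from an arbitrary point with step size $\eta=|I|^{-3/4}$, run on the rounds of $I$ only; set $R_{t-1,I}=C_{t-1,I}=0$. The active set $\mathcal{A}_t$ consists of the experts $E_I$ with $t\in I$. Each $E_I\in\mathcal{A}_t$ outputs $\mathbf{x}_{t,I}\in\mathcal{K}$; set $w_{t,I}=w(R_{t-1,I},C_{t-1,I})/\sum_{E_{I'}\in\mathcal{A}_t}w(R_{t-1,I'},C_{t-1,I'})$ and play $\mathbf{x}_t=\sum_{E_I\in\mathcal{A}_t}w_{t,I}\mathbf{x}_{t,I}$. After $f_t$ is revealed, for each $E_I\in\mathcal{A}_t$ set $R_{t,I}=R_{t-1,I}+f_t(\mathbf{x}_t)-f_t(\mathbf{x}_{t,I})$, $C_{t,I}=C_{t-1,I}+|f_t(\mathbf{x}_t)-f_t(\mathbf{x}_{t,I})|$, and pass $f_t$ to $E_I$. *)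

theory Defs
  imports "HOL-Analysis.Analysis"
begin

definition GC :: "nat set set" where
  "GC = {{i * 2^k .. (i + 1) * 2^k - 1} | i k. (i::nat) \<ge> 1}"

text \<open>Potential and weight of POLA. Note Phi 0 0 = exp 0 = 1 since x / 0 = 0.\<close>
definition Phi :: "real \<Rightarrow> real \<Rightarrow> real" where
  "Phi R C = exp ((max 0 R)^2 / (3 * C))"

definition wgt :: "real \<Rightarrow> real \<Rightarrow> real" where
  "wgt R C = (Phi (R + 1) (C + 1) - Phi (R - 1) (C + 1)) / 2"

definition eta :: "nat set \<Rightarrow> real" where
  "eta I = real (card I) powr (-3/4)"

text \<open>State (x_{m+1}, y~_{m+1}) of BOGD_IP for expert E_I at (0-based) block m.
  Oracle Orc may depend on the expert I and the call index; its outputs are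
  constrained by the theorem's hypothesis.\<close>
primrec bogd_state ::
  "(nat set \<Rightarrow> nat \<Rightarrow> real \<Rightarrow> 'a \<Rightarrow> 'a \<Rightarrow> 'a \<times> 'a) \<Rightarrow> (nat \<Rightarrow> 'a \<Rightarrow> 'a::real_vector)
   \<Rightarrow> (nat set \<Rightarrow> 'a) \<Rightarrow> (nat set \<Rightarrow> nat) \<Rightarrow> nat set \<Rightarrow> nat \<Rightarrow> 'a \<times> 'a" where
  "bogd_state Orc g x0 bsz I 0 = (x0 I, x0 I)"
| "bogd_state Orc g x0 bsz I (Suc m) =
    (case bogd_state Orc g x0 bsz I m of (x, y) \<Rightarrow>
      Orc I (Suc m) (eta I powr (2/3)) x
        (y - eta I *\<^sub>R (\<Sum>r\<in>{Min I + m * bsz I ..< Min I + Suc m * bsz I}. g r x)))"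

definition expert_play ::
  "(nat set \<Rightarrow> nat \<Rightarrow> real \<Rightarrow> 'a \<Rightarrow> 'a \<Rightarrow> 'a \<times> 'a) \<Rightarrow> (nat \<Rightarrow> 'a \<Rightarrow> 'a::real_vector)
   \<Rightarrow> (nat set \<Rightarrow> 'a) \<Rightarrow> (nat set \<Rightarrow> nat) \<Rightarrow> nat set \<Rightarrow> nat \<Rightarrow> 'a" where
  "expert_play Orc g x0 bsz I t = fst (bogd_state Orc g x0 bsz I ((t - Min I) div bsz I))"

definition active :: "nat \<Rightarrow> nat set set" where
  "active t = {I \<in> GC. t \<in> I}"

definition regR :: "(nat \<Rightarrow> 'a \<Rightarrow> real) \<Rightarrow> (nat set \<Rightarrow> nat \<Rightarrow> 'a) \<Rightarrow> (nat \<Rightarrow> 'a) \<Rightarrow> nat set \<Rightarrow> nat \<Rightarrow> real" where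
  "regR f ep X I t = (\<Sum>u\<in>{u \<in> I. u \<le> t}. f u (X u) - f u (ep I u))"

definition regC :: "(nat \<Rightarrow> 'a \<Rightarrow> real) \<Rightarrow> (nat set \<Rightarrow> nat \<Rightarrow> 'a) \<Rightarrow> (nat \<Rightarrow> 'a) \<Rightarrow> nat set \<Rightarrow> nat \<Rightarrow> real" where
  "regC f ep X I t = (\<Sum>u\<in>{u \<in> I. u \<le> t}. \<bar>f u (X u) - f u (ep I u)\<bar>)"

definition pola_step :: "(nat \<Rightarrow> 'a \<Rightarrow> real) \<Rightarrow> (nat set \<Rightarrow> nat \<Rightarrow> 'a::real_vector) \<Rightarrow> (nat \<Rightarrow> 'a) \<Rightarrow> nat \<Rightarrow> 'a" where
  "pola_step f ep X t =
     (let W = (\<Sum>I\<in>active t. wgt (regR f ep X I (t - 1)) (regC f ep X I (t - 1)))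
      in \<Sum>I\<in>active t. (wgt (regR f ep X I (t - 1)) (regC f ep X I (t - 1)) / W) *\<^sub>R ep I t)"

primrec pola_hist :: "(nat \<Rightarrow> 'a \<Rightarrow> real) \<Rightarrow> (nat set \<Rightarrow> nat \<Rightarrow> 'a::real_vector) \<Rightarrow> nat \<Rightarrow> nat \<Rightarrow> 'a" where
  "pola_hist f ep 0 = (\<lambda>u. 0)"
| "pola_hist f ep (Suc t) = (pola_hist f ep t)(Suc t := pola_step f ep (pola_hist f ep t) (Suc t))"

definition pola_play :: "(nat \<Rightarrow> 'a \<Rightarrow> real) \<Rightarrow> (nat set \<Rightarrow> nat \<Rightarrow> 'a::real_vector) \<Rightarrow> nat \<Rightarrow> 'a" where
  "pola_play f ep t = pola_hist f ep t t"

definition cbound :: "nat \<Rightarrow> real" where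
  "cbound j = 1 + ln (real j) + ln (1 + log 2 (real j)) + ln ((5 + 3 * ln (1 + real j)) / 2)"

end

theory Submission
  imports Defs "HOL-Probability.Hoeffding"
begin

text \<open>
  On an interval \<open>J\<close> the regret of POLA splits into the regret of POLA against the expert
  \<open>E\<^sub>J\<close> and the regret of \<open>E\<^sub>J\<close> against a fixed comparator.

  For the first part, the potential \<open>Phi R C\<close> of an expert changes in one round by at most its
  weight times the instantaneous regret plus \<open>3 |r| / (2 (C + 1))\<close>: convexity of \<open>Phi\<close> along the
  update reduces this to a second difference of \<open>Phi\<close>, which \<open>cosh y \<le> exp (y^2 / 2)\<close> controls.
  Summed over the fewer than \<open>2 j\<close> experts started by round \<open>j\<close>, the weighted terms are
  nonpositive by Jensen's inequality and the error terms add up to a logarithm, so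
  \<open>exp (R\<^sub>J^2 / (3 C\<^sub>J)) \<le> 2 j (1 + 3 ln (1 + j))\<close>; with \<open>C\<^sub>J \<le> |J|\<close> this gives
  \<open>R\<^sub>J \<le> sqrt (3 c(j) |J|)\<close>.

  For the second part, each of the \<open>sqrt |J|\<close> blocks of \<open>E\<^sub>J\<close> is one step of online gradient
  descent with the block gradient, paid for by the decrease of the squared distance of the
  auxiliary iterate to the comparator, plus the error \<open>sqrt (3 \<epsilon>)\<close> of the infeasible projection.
\<close>

section \<open>Elementary inequalities\<close>

text \<open>Hoeffding's lemma for a fair sign.\<close>
lemma cosh_le_exp_half_square: "cosh (y::real) \<le> exp (y^2 / 2)"
proof -
  have cosh_le_nonneg: "cosh y \<le> exp (y^2 / 2)" if "y \<ge> 0" for y :: real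
  proof -
    have "ln (1 + (exp (2*y) - 1) / 2) \<le> y + y^2 / 2"
      using Hoeffdings_lemma_aux[of "2*y" "1/2"] that by (simp add: power2_eq_square)
    moreover have "1 + (exp (2*y) - 1) / 2 > 0"
      by (simp add: field_simps add_pos_pos)
    ultimately have "1 + (exp (2*y) - 1) / 2 \<le> exp (y + y^2 / 2)"
      by (metis exp_le_cancel_iff exp_ln)
    then have "(1 + exp (2*y)) / 2 \<le> exp (y + y^2 / 2)"
      by (simp add: field_simps)
    then have "exp (-y) * ((1 + exp (2*y)) / 2) \<le> exp (-y) * exp (y + y^2 / 2)"
      by simp
    then show ?thesis
      by (simp add: cosh_def field_simps flip: exp_add)
  qed
  show ?thesis
    using cosh_le_nonneg[of y] cosh_le_nonneg[of "-y"] by (cases "y \<ge> 0") auto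
qed

lemma exp_mean_le: "(exp (m + y) + exp (m - y)) / 2 \<le> exp (m + y^2 / 2 :: real)"
proof -
  have "(exp (m + y) + exp (m - y)) / 2 = exp m * cosh y"
    by (simp add: cosh_def field_simps flip: exp_add exp_diff)
  also have "\<dots> \<le> exp m * exp (y^2 / 2)"
    using cosh_le_exp_half_square by simp
  finally show ?thesis
    by (simp flip: exp_add)
qed

lemma exp_excess_le:
  fixes q \<delta> :: real
  assumes "0 \<le> q" "q \<le> 1" "0 \<le> \<delta>" "\<delta> \<le> 1 / 6"
  shows "exp q * (exp \<delta> - 1) \<le> 7 / 2 * \<delta>"
proof -
  have "exp q \<le> 3"
    using assms exp_bound[of q] power_le_one[of q 2] by simp
  moreover have "exp \<delta> - 1 \<le> \<delta> + \<delta> * \<delta>"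
    using assms exp_bound[of \<delta>] by (simp add: power2_eq_square)
  moreover have "\<delta> * \<delta> \<le> \<delta> * (1 / 6)"
    using assms by (intro mult_left_mono) auto
  ultimately have "exp q * (exp \<delta> - 1) \<le> 3 * (7 / 6 * \<delta>)"
    using assms by (intro mult_mono) auto
  then show ?thesis
    by simp
qed

lemma perspective_square_convex:
  fixes s u0 u1 C0 C1 :: real
  assumes s: "0 \<le> s" "s \<le> 1" and C: "C0 \<ge> 0" "C1 > 0" and "C0 = 0 \<Longrightarrow> u0 = 0"
  shows "((1 - s) * u0 + s * u1)^2 / ((1 - s) * C0 + s * C1) \<le> (1 - s) * (u0^2 / C0) + s * (u1^2 / C1)"
proof (cases "C0 = 0")
  case True
  then show ?thesis
    using assms by (cases "s = 0") (simp_all add: power2_eq_square algebra_simps)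
next
  case False
  define x0 x1 where "x0 = u0 / C0" and "x1 = u1 / C1"
  define D where "D = (1 - s) * C0 + s * C1"
  have u: "u0 = C0 * x0" "u1 = C1 * x1"
    using False C by (simp_all add: x0_def x1_def)
  have u_sq: "u0^2 / C0 = C0 * x0^2" "u1^2 / C1 = C1 * x1^2"
    using False C by (simp_all add: u power2_eq_square)
  have D: "D \<ge> 0"
    using s C by (simp add: D_def)
  have "D * ((1 - s) * C0 * x0^2 + s * C1 * x1^2) - ((1 - s) * (C0 * x0) + s * (C1 * x1))^2
      = (1 - s) * s * C0 * C1 * (x0 - x1)^2"
    by (simp add: D_def power2_eq_square algebra_simps)
  also have "\<dots> \<ge> 0"
    using s C by simp
  finally have "((1 - s) * u0 + s * u1)^2 \<le> D * ((1 - s) * (u0^2 / C0) + s * (u1^2 / C1))"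
    unfolding u_sq by (simp add: u mult.assoc)
  then have "((1 - s) * u0 + s * u1)^2 / D \<le> D * ((1 - s) * (u0^2 / C0) + s * (u1^2 / C1)) / D"
    using D by (rule divide_right_mono)
  also have "\<dots> \<le> (1 - s) * (u0^2 / C0) + s * (u1^2 / C1)"
    by (cases "D = 0") (use s C in \<open>auto intro!: add_nonneg_nonneg mult_nonneg_nonneg\<close>)
  finally show ?thesis
    unfolding D_def .
qed

lemma ln_increment_ge:
  fixes C a :: real
  assumes "C \<ge> 0" "0 \<le> a" "a \<le> 1"
  shows "a / (C + 1) \<le> 2 * (ln (1 + (C + a)) - ln (1 + C))"
proof -
  define x where "x = (1 + (C + a)) / (1 + C)"
  have x: "x > 0"
    using assms by (simp add: x_def)
  have "a * a \<le> a + C * a"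
    using assms mult_left_le[of a a] mult_nonneg_nonneg[of C a] by linarith
  then have "a / (C + 1) \<le> 2 * (a / (1 + C + a))"
    using assms by (simp add: field_simps)
  also have "a / (1 + C + a) = 1 - 1 / x"
    using assms by (simp add: x_def field_simps)
  also have "1 - 1 / x \<le> ln x"
    using ln_le_minus_one[of "1 / x"] x by (simp add: ln_div)
  also have "ln x = ln (1 + (C + a)) - ln (1 + C)"
    using assms by (simp add: x_def ln_div)
  finally show ?thesis
    by simp
qed

section \<open>The potential function\<close>

lemma Phi_ge_one: "C \<ge> 0 \<Longrightarrow> Phi R C \<ge> 1"
  unfolding Phi_def by simp

lemma Phi_mono:
  assumes "R \<le> R'" "C \<ge> 0"
  shows "Phi R C \<le> Phi R' C"
proof -
  have "(max 0 R)^2 \<le> (max 0 R')^2"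
    using assms by (intro power_mono) auto
  then show ?thesis
    unfolding Phi_def using assms by (simp add: divide_right_mono)
qed

lemma wgt_nonneg: "C \<ge> 0 \<Longrightarrow> wgt R C \<ge> 0"
  unfolding wgt_def using Phi_mono[of "R - 1" "R + 1" "C + 1"] by simp

lemma Phi_second_difference_le_small:
  fixes R C :: real
  assumes "R \<le> 1" "R \<le> C" "C \<ge> 0"
  shows "(Phi (R + 1) (C + 1) + Phi (R - 1) (C + 1)) / 2 - Phi R C \<le> 3 / (2 * (C + 1))"
proof -
  define c where "c = C + 1"
  define u where "u = max 0 (R + 1)"
  define x where "x = u^2 / (3 * c)"
  have c1: "c \<ge> 1" and u: "0 \<le> u" "u \<le> 2" "u \<le> c"
    using assms by (auto simp: c_def u_def)
  have "u^2 \<le> 4"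
    using power_mono[of u 2 2] u by simp
  then have x_le: "x \<le> 4 / (3 * c)"
    unfolding x_def using c1 by (intro divide_right_mono) auto
  have "u^2 \<le> 2 * c"
    using mult_mono[of u 2 u c] u by (simp add: power2_eq_square mult.commute)
  then have "x \<le> 2 / 3"
    unfolding x_def using c1 by (simp add: field_simps)
  moreover have "x \<ge> 0"
    unfolding x_def using c1 by simp
  ultimately have "exp x \<le> 1 + x + x * x"
    using exp_bound[of x] by (simp add: power2_eq_square)
  also have "x * x \<le> x"
    using \<open>x \<ge> 0\<close> \<open>x \<le> 2/3\<close> mult_left_le[of x x] by simp
  finally have "(exp x - 1) / 2 \<le> 4 / (3 * c)"
    using x_le by simp
  also have "\<dots> \<le> 3 / (2 * (C + 1))"
    using c1 by (simp add: c_def field_simps)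
  finally have "(exp x - 1) / 2 \<le> 3 / (2 * (C + 1))" .
  moreover have "Phi (R + 1) (C + 1) = exp x" "Phi (R - 1) (C + 1) = 1"
    using assms by (simp_all add: Phi_def x_def u_def c_def max_def)
  moreover have "Phi R C \<ge> 1"
    using Phi_ge_one assms by simp
  ultimately show ?thesis
    unfolding add_divide_distrib diff_divide_distrib by linarith
qed

lemma Phi_mean_le_large:
  fixes R c :: real
  assumes "1 \<le> R" "R \<le> c - 1"
  shows "(Phi (R + 1) c + Phi (R - 1) c) / 2 \<le> Phi R (c - 1) * exp (1 / (3 * c) - R^2 * (c + 2) / (9 * c^2 * (c - 1)))"
proof -
  define m y where "m = (R^2 + 1) / (3 * c)" and "y = 2 * R / (3 * c)"
  have c: "c \<ge> 2"
    using assms by simp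
  have "m + y = (R + 1)^2 / (3 * c)" "m - y = (R - 1)^2 / (3 * c)"
    using c by (simp_all add: m_def y_def field_simps power2_eq_square)
  then have "(Phi (R + 1) c + Phi (R - 1) c) / 2 = (exp (m + y) + exp (m - y)) / 2"
    using assms by (simp add: Phi_def max_def)
  also have "\<dots> \<le> exp (m + y^2 / 2)"
    by (rule exp_mean_le)
  also have "m + y^2 / 2 - R^2 / (3 * (c - 1)) = 1 / (3 * c) - R^2 * (c + 2) / (9 * c^2 * (c - 1))"
    using c by (simp add: m_def y_def field_simps power2_eq_square)
  then have "m + y^2 / 2 = R^2 / (3 * (c - 1)) + (1 / (3 * c) - R^2 * (c + 2) / (9 * c^2 * (c - 1)))"
    by linarith
  finally show ?thesis
    using assms by (simp add: Phi_def exp_add)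
qed

lemma Phi_second_difference_le_large:
  fixes R C :: real
  assumes "1 \<le> R" "R \<le> C"
  shows "(Phi (R + 1) (C + 1) + Phi (R - 1) (C + 1)) / 2 - Phi R C \<le> 3 / (2 * (C + 1))"
proof -
  define c q \<delta> where "c = C + 1" and "q = R^2 / (3 * C)"
    and "\<delta> = 1 / (3 * c) - R^2 * (c + 2) / (9 * c^2 * (c - 1))"
  have c: "c \<ge> 2"
    using assms by (simp add: c_def)
  have mean: "(Phi (R + 1) c + Phi (R - 1) c) / 2 - Phi R C \<le> exp q * (exp \<delta> - 1)"
    using Phi_mean_le_large[of R c] assms by (simp add: Phi_def c_def q_def \<delta>_def right_diff_distrib)
  show ?thesis
  proof (cases "\<delta> \<le> 0")
    case True
    then have "exp q * (exp \<delta> - 1) \<le> 0"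
      by (simp add: mult_nonneg_nonpos)
    moreover have "0 \<le> 3 / (2 * (C + 1))"
      using c by (simp add: c_def)
    ultimately show ?thesis
      using mean unfolding c_def by linarith
  next
    case False
    \<comment> \<open>\<open>\<delta> > 0\<close> forces \<open>R^2 < 3 C\<close>, i.e. \<open>q < 1\<close>\<close>
    have "R^2 * (c + 2) / (9 * c^2 * (c - 1)) < 1 / (3 * c)"
      using False by (simp add: \<delta>_def)
    then have "R^2 * (c + 2) < 1 / (3 * c) * (9 * c^2 * (c - 1))"
      using c by (subst (asm) pos_divide_less_eq) auto
    also have "\<dots> = 3 * c * (c - 1)"
      using c by (simp add: field_simps power2_eq_square)
    also have "\<dots> \<le> 3 * (c - 1) * (c + 2)"
      using c by (simp add: algebra_simps)
    finally have "q \<le> 1"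
      using c by (simp add: q_def c_def)
    moreover have "\<delta> \<le> 1 / (3 * c)" "1 / (3 * c) \<le> 1 / 6"
      using c by (simp_all add: \<delta>_def field_simps)
    ultimately have "exp q * (exp \<delta> - 1) \<le> 7 / 2 * (1 / (3 * c))"
      using exp_excess_le[of q \<delta>] False assms by (simp add: q_def)
    also have "\<dots> \<le> 3 / (2 * (C + 1))"
      using c by (simp add: c_def field_simps)
    finally show ?thesis
      using mean unfolding c_def by linarith
  qed
qed

lemma Phi_second_difference_le:
  assumes "R \<le> C" "C \<ge> 0"
  shows "(Phi (R + 1) (C + 1) + Phi (R - 1) (C + 1)) / 2 - Phi R C \<le> 3 / (2 * (C + 1))"
  using Phi_second_difference_le_small Phi_second_difference_le_large assms by (cases "R \<le> 1") auto

lemma Phi_convex_step: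
  assumes "C \<ge> 0" "R \<le> C" "0 \<le> s" "s \<le> 1"
  shows "Phi (R + s * d) (C + s) \<le> (1 - s) * Phi R C + s * Phi (R + d) (C + 1)"
proof -
  define u0 u1 where "u0 = max 0 R" and "u1 = max 0 (R + d)"
  define e0 e1 where "e0 = u0^2 / (3 * C)" and "e1 = u1^2 / (3 * (C + 1))"
  have "max 0 (R + s * d) \<le> (1 - s) * u0 + s * u1"
  proof -
    have "(1 - s) * R \<le> (1 - s) * u0" "s * (R + d) \<le> s * u1"
      using assms by (simp_all add: u0_def u1_def mult_left_mono)
    moreover have "0 \<le> (1 - s) * u0 + s * u1"
      using assms by (simp add: u0_def u1_def)
    ultimately show ?thesis
      by (simp add: algebra_simps)
  qed
  then have "(max 0 (R + s * d))^2 \<le> ((1 - s) * u0 + s * u1)^2"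
    by (intro power_mono) auto
  then have "(max 0 (R + s * d))^2 / (3 * (C + s))
      \<le> ((1 - s) * u0 + s * u1)^2 / ((1 - s) * (3 * C) + s * (3 * (C + 1)))"
    using assms by (simp add: divide_right_mono algebra_simps)
  also have "\<dots> \<le> (1 - s) * e0 + s * e1"
    unfolding e0_def e1_def using assms
    by (intro perspective_square_convex) (auto simp: u0_def)
  finally have "Phi (R + s * d) (C + s) \<le> exp ((1 - s) * e0 + s * e1)"
    by (simp add: Phi_def)
  also have "\<dots> \<le> (1 - s) * exp e0 + s * exp e1"
    using convex_onD[OF exp_convex, of s e0 e1] assms by simp
  finally show ?thesis
    by (simp add: Phi_def e0_def e1_def u0_def u1_def)
qed

lemma Phi_step:
  assumes "C \<ge> 0" "R \<le> C" "\<bar>r\<bar> \<le> 1"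
  shows "Phi (R + r) (C + \<bar>r\<bar>) \<le> Phi R C + wgt R C * r + 3 * \<bar>r\<bar> / (2 * (C + 1))"
proof -
  define s d where "s = \<bar>r\<bar>" and "d = (if r \<ge> 0 then 1 else - 1 :: real)"
  define P1 P2 where "P1 = Phi (R + 1) (C + 1)" and "P2 = Phi (R - 1) (C + 1)"
  have s: "0 \<le> s" "s \<le> 1" and r: "r = s * d"
    using assms by (simp_all add: s_def d_def)
  have Pd: "Phi (R + d) (C + 1) = (P1 + P2) / 2 + d * (P1 - P2) / 2"
    unfolding d_def P1_def P2_def by (cases "r \<ge> 0") (simp_all add: add_divide_distrib diff_divide_distrib)
  have "Phi (R + r) (C + s) \<le> (1 - s) * Phi R C + s * Phi (R + d) (C + 1)"
    using Phi_convex_step[OF assms(1,2) s] by (simp add: r)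
  also have "\<dots> = Phi R C + wgt R C * r + s * ((P1 + P2) / 2 - Phi R C)"
    unfolding Pd r wgt_def P1_def[symmetric] P2_def[symmetric] by (simp add: algebra_simps)
  also have "s * ((P1 + P2) / 2 - Phi R C) \<le> s * (3 / (2 * (C + 1)))"
    using Phi_second_difference_le[OF assms(2,1)] s by (intro mult_left_mono) (simp_all add: P1_def P2_def)
  finally show ?thesis
    by (simp add: s_def mult.commute)
qed

lemma Phi_ln_step:
  assumes "C \<ge> 0" "R \<le> C" "\<bar>r\<bar> \<le> 1"
  shows "Phi (R + r) (C + \<bar>r\<bar>) - 3 * ln (1 + (C + \<bar>r\<bar>)) \<le> Phi R C - 3 * ln (1 + C) + wgt R C * r"
proof -
  have "3 * \<bar>r\<bar> / (2 * (C + 1)) = 3 / 2 * (\<bar>r\<bar> / (C + 1))"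
    by simp
  also have "\<dots> \<le> 3 / 2 * (2 * (ln (1 + (C + \<bar>r\<bar>)) - ln (1 + C)))"
    using ln_increment_ge[OF assms(1) abs_ge_zero assms(3)] by (rule mult_left_mono) simp
  finally show ?thesis
    using Phi_step[OF assms] by simp
qed

section \<open>Geometric covering intervals\<close>

lemma GC_E:
  assumes "I \<in> GC"
  obtains i k where "i \<ge> 1" "I = {i * 2^k .. (i + 1) * 2^k - 1}" "i * 2^k \<le> (i + 1) * 2^k - 1"
proof -
  obtain i k where "i \<ge> 1" "I = {i * 2^k .. (i + 1) * 2^k - 1}"
    using assms unfolding GC_def by auto
  moreover have "i * 2^k + 1 \<le> (i + 1) * 2^k"
    by simp
  ultimately show ?thesis
    using that by (metis add_le_imp_le_diff)
qed

lemma GC_finite: "I \<in> GC \<Longrightarrow> finite I"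
  by (erule GC_E) simp

lemma GC_nonempty: "I \<in> GC \<Longrightarrow> I \<noteq> {}"
  by (erule GC_E) auto

lemma GC_pos: "I \<in> GC \<Longrightarrow> u \<in> I \<Longrightarrow> 1 \<le> u"
  by (erule GC_E) (auto intro: order_trans[rotated])

lemma card_GC_upto_le: "I \<in> GC \<Longrightarrow> card {u \<in> I. u \<le> t} \<le> t"
  using card_mono[of "{1..t}" "{u \<in> I. u \<le> t}"] GC_pos by fastforce

definition GC_started :: "nat \<Rightarrow> nat set set" where
  "GC_started t = {I \<in> GC. Min I \<le> t}"

lemma GC_started_subset:
  "GC_started t \<subseteq> (\<lambda>(k, i). {i * 2^k .. (i + 1) * 2^k - 1}) ` (SIGMA k:{..<t}. {1..t div 2^k})"
proof
  fix I
  assume "I \<in> GC_started t"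
  then obtain i k where ik: "i \<ge> 1" "I = {i * 2^k .. (i + 1) * 2^k - 1}"
    "i * 2^k \<le> (i + 1) * 2^k - 1" and "Min I \<le> t"
    unfolding GC_started_def by (auto elim: GC_E)
  moreover have "Min I = i * 2^k"
    using ik by (intro Min_eqI) auto
  ultimately have it: "i * 2^k \<le> t"
    by simp
  have "k < 2^k" "2^k \<le> i * 2^k"
    using ik by (simp_all add: less_exp)
  then have "k < t"
    using it by linarith
  moreover have "i \<le> t div 2^k"
    using it by (simp add: less_eq_div_iff_mult_less_eq)
  ultimately show "I \<in> (\<lambda>(k, i). {i * 2^k .. (i + 1) * 2^k - 1}) ` (SIGMA k:{..<t}. {1..t div 2^k})"
    using ik by (auto intro!: image_eqI[where x="(k, i)"])
qed

lemma finite_GC_started: "finite (GC_started t)"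
  by (rule finite_subset[OF GC_started_subset]) auto

text \<open>At most \<open>t / 2^k\<close> intervals of length \<open>2^k\<close> start by round \<open>t\<close>.\<close>
lemma card_GC_started_le: "real (card (GC_started t)) \<le> 2 * real t"
proof -
  have "card (GC_started t) \<le> card (SIGMA k:{..<t}. {1..t div 2^k})"
    by (rule order_trans[OF card_mono[OF _ GC_started_subset] card_image_le]) auto
  also have "\<dots> = (\<Sum>k<t. t div 2^k)"
    by (simp add: card_SigmaI)
  finally have "real (card (GC_started t)) \<le> (\<Sum>k<t. real (t div 2^k))"
    by (simp flip: of_nat_sum)
  also have "\<dots> \<le> (\<Sum>k<t. real t * (1/2)^k)"
    by (intro sum_mono) (use of_nat_div_le_of_nat[of t "2^_"] in \<open>simp add: power_divide\<close>)
  also have "\<dots> = real t * (\<Sum>k<t. (1/2)^k)"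
    by (simp add: sum_distrib_left)
  also have "\<dots> \<le> real t * 2"
    using geometric_sum[of "1/2::real" t] by (intro mult_left_mono) auto
  finally show ?thesis
    by simp
qed

lemma active_eq_GC_started: "u \<le> t \<Longrightarrow> active u = {I \<in> GC_started t. u \<in> I}"
  unfolding active_def GC_started_def using GC_finite by (auto intro: order_trans[OF Min_le])

lemma finite_active: "finite (active u)"
  using active_eq_GC_started[of u u] finite_GC_started by simp

lemma GC_upto_0: "I \<in> GC \<Longrightarrow> {u \<in> I. u \<le> 0} = {}"
  using GC_pos[of I] by fastforce

lemma cbound_ge_one: "1 \<le> j \<Longrightarrow> 1 \<le> cbound j"
  unfolding cbound_def by (simp add: add_nonneg_nonneg)

lemma ln_le_cbound:
  assumes "1 \<le> j"
  shows "ln (2 * real j * (1 + 3 * ln (1 + real j))) \<le> cbound j"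
proof -
  define L lg where "L = ln (1 + real j)" and "lg = log 2 (real j)"
  have L: "L > 0" and lg: "lg \<ge> 0"
    using assms by (simp_all add: L_def lg_def)
  have "2 * (1 + 3 * L) \<le> 2 * ((1 + lg) * ((5 + 3 * L) / 2))"
  proof (cases "j = 1")
    case True
    then have "L \<le> 1" "lg = 0"
      using ln_2_less_1 by (simp_all add: L_def lg_def)
    then show ?thesis
      by simp
  next
    case False
    then have "lg \<ge> 1"
      using assms by (simp add: lg_def)
    then have "L * 6 \<le> L * (lg * 6)"
      using L by simp
    then show ?thesis
      using \<open>lg \<ge> 1\<close> by (simp add: algebra_simps)
  qed
  also have "\<dots> \<le> exp 1 * ((1 + lg) * ((5 + 3 * L) / 2))"
    using exp_ge_add_one_self[of 1] L lg by (intro mult_right_mono) auto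
  finally have key: "2 * (1 + 3 * L) \<le> exp 1 * ((1 + lg) * ((5 + 3 * L) / 2))" .
  have "ln (2 * real j * (1 + 3 * L)) = ln (real j * (2 * (1 + 3 * L)))"
    by (simp add: mult_ac)
  also have "\<dots> = ln (real j) + ln (2 * (1 + 3 * L))"
    using assms L by (intro ln_mult_pos) auto
  also have "ln (2 * (1 + 3 * L)) \<le> ln (exp 1 * ((1 + lg) * ((5 + 3 * L) / 2)))"
    using key L by simp
  also have "\<dots> = ln (exp 1) + ln ((1 + lg) * ((5 + 3 * L) / 2))"
    by (rule ln_mult_pos) (use L lg in auto)
  also have "ln ((1 + lg) * ((5 + 3 * L) / 2)) = ln (1 + lg) + ln ((5 + 3 * L) / 2)"
    by (rule ln_mult_pos) (use L lg in auto)
  finally show ?thesis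
    by (simp add: cbound_def L_def lg_def)
qed

section \<open>The meta-algorithm\<close>

lemma sum_upto_Suc:
  "(\<Sum>u\<in>{u \<in> I. u \<le> Suc t}. h u) = (\<Sum>u\<in>{u \<in> I. u \<le> t}. h u) + (if Suc t \<in> I then h (Suc t) else 0)"
proof (cases "Suc t \<in> I")
  case True
  then have "{u \<in> I. u \<le> Suc t} = insert (Suc t) {u \<in> I. u \<le> t}"
    by auto
  then show ?thesis
    using True by (simp add: add.commute)
next
  case False
  then have "{u \<in> I. u \<le> Suc t} = {u \<in> I. u \<le> t}"
    using le_Suc_eq by auto
  then show ?thesis
    using False by simp
qed

locale pola =
  fixes K :: "'a::real_vector set" and T :: nat
    and f :: "nat \<Rightarrow> 'a \<Rightarrow> real" and ep :: "nat set \<Rightarrow> nat \<Rightarrow> 'a"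
  assumes convex_K: "convex K" and zero_in_K: "0 \<in> K"
    and convex_f: "\<forall>t\<in>{1..T}. convex_on K (f t)"
    and f_range: "\<forall>t\<in>{1..T}. \<forall>x\<in>K. 0 \<le> f t x \<and> f t x \<le> 1"
    and ep_in_K: "\<And>I t. I \<in> GC \<Longrightarrow> t \<in> I \<Longrightarrow> ep I t \<in> K"
begin

definition play :: "nat \<Rightarrow> 'a" where
  "play t = pola_play f ep t"

definition inst_regret :: "nat set \<Rightarrow> nat \<Rightarrow> real" where
  "inst_regret I u = f u (play u) - f u (ep I u)"

definition regret :: "nat set \<Rightarrow> nat \<Rightarrow> real" where
  "regret I t = regR f ep play I t"

definition abs_regret :: "nat set \<Rightarrow> nat \<Rightarrow> real" where
  "abs_regret I t = regC f ep play I t"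

definition weight :: "nat set \<Rightarrow> nat \<Rightarrow> real" where
  "weight I u = wgt (regret I (u - 1)) (abs_regret I (u - 1))"

definition total_weight :: "nat \<Rightarrow> real" where
  "total_weight u = (\<Sum>I\<in>active u. weight I u)"

definition weighted_regret :: "nat set \<Rightarrow> nat \<Rightarrow> real" where
  "weighted_regret I t = (\<Sum>u\<in>{u \<in> I. u \<le> t}. weight I u * inst_regret I u)"

lemma pola_hist_eq_play: "u \<le> t \<Longrightarrow> pola_hist f ep t u = play u"
proof (induction t arbitrary: u)
  case 0
  then show ?case
    by (simp add: play_def pola_play_def)
next
  case (Suc t)
  then show ?case
    by (cases "u = Suc t") (simp_all add: play_def pola_play_def)
qed

lemma play_Suc:
  "play (Suc t) = (\<Sum>I\<in>active (Suc t). (weight I (Suc t) / total_weight (Suc t)) *\<^sub>R ep I (Suc t))"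
proof -
  have "regR f ep (pola_hist f ep t) I t = regret I t" "regC f ep (pola_hist f ep t) I t = abs_regret I t"
    for I
    unfolding regR_def regC_def regret_def abs_regret_def by (auto intro!: sum.cong simp: pola_hist_eq_play)
  then show ?thesis
    by (simp add: play_def pola_play_def pola_step_def Let_def weight_def total_weight_def)
qed

lemma abs_regret_nonneg: "abs_regret I t \<ge> 0"
  unfolding abs_regret_def regC_def by (simp add: sum_nonneg)

lemma regret_le_abs_regret: "regret I t \<le> abs_regret I t"
  unfolding regret_def abs_regret_def regR_def regC_def by (intro sum_mono) simp

lemma weight_nonneg: "weight I u \<ge> 0"
  unfolding weight_def by (simp add: wgt_nonneg abs_regret_nonneg)

lemma total_weight_nonneg: "total_weight u \<ge> 0"
  unfolding total_weight_def by (simp add: sum_nonneg weight_nonneg)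

lemma play_in_K: "play t \<in> K"
proof (cases t)
  case 0
  then show ?thesis
    using zero_in_K by (simp add: play_def pola_play_def)
next
  case (Suc t')
  show ?thesis
  proof (cases "total_weight t = 0")
    case True
    \<comment> \<open>every coefficient is \<open>w / 0 = 0\<close>, so POLA plays \<open>0\<close>\<close>
    then show ?thesis
      using zero_in_K by (simp add: Suc play_Suc)
  next
    case False
    then have "total_weight t > 0"
      using total_weight_nonneg[of t] by simp
    then have "(\<Sum>I\<in>active t. weight I t / total_weight t) = 1"
      by (simp add: total_weight_def flip: sum_divide_distrib)
    then show ?thesis
      unfolding Suc play_Suc using \<open>total_weight t > 0\<close> weight_nonneg ep_in_K
      by (intro convex_sum[OF finite_active convex_K]) (auto simp: Suc active_def)
  qed
qed

text \<open>Jensen's inequality for the convex loss at POLA's weighted average.\<close>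
lemma weighted_inst_regret_nonpos:
  assumes "u \<in> {1..T}"
  shows "(\<Sum>I\<in>active u. weight I u * inst_regret I u) \<le> 0"
proof -
  obtain t where u: "u = Suc t"
    using assms by (cases u) auto
  have split: "(\<Sum>I\<in>active u. weight I u * inst_regret I u)
      = total_weight u * f u (play u) - (\<Sum>I\<in>active u. weight I u * f u (ep I u))"
    by (simp add: inst_regret_def total_weight_def right_diff_distrib sum_subtractf sum_distrib_right)
  show ?thesis
  proof (cases "total_weight u = 0")
    case True
    then have "weight I u = 0" if "I \<in> active u" for I
      using that sum_nonneg_eq_0_iff[of "active u" "\<lambda>I. weight I u"] finite_active weight_nonneg
      by (simp add: total_weight_def)
    then show ?thesis
      unfolding split using True by simp
  next
    case False
    then have W: "total_weight u > 0"
      using total_weight_nonneg[of u] by simp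
    have "(\<Sum>I\<in>active u. weight I u / total_weight u) = 1"
      using W by (simp add: total_weight_def flip: sum_divide_distrib)
    moreover have "active u \<noteq> {}"
      using False by (auto simp: total_weight_def)
    ultimately have "f u (play u) \<le> (\<Sum>I\<in>active u. (weight I u / total_weight u) * f u (ep I u))"
      unfolding u play_Suc using convex_f assms W weight_nonneg ep_in_K
      by (intro convex_on_sum[OF finite_active]) (auto simp: u active_def)
    then have "f u (play u) \<le> (\<Sum>I\<in>active u. weight I u * f u (ep I u)) / total_weight u"
      by (simp add: sum_divide_distrib)
    then have "total_weight u * f u (play u) \<le> (\<Sum>I\<in>active u. weight I u * f u (ep I u))"
      using W by (simp add: pos_le_divide_eq mult.commute)
    then show ?thesis
      unfolding split by simp
  qed
qed

lemma regret_Suc: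
  "regret I (Suc t) = regret I t + (if Suc t \<in> I then inst_regret I (Suc t) else 0)"
  unfolding regret_def regR_def inst_regret_def by (rule sum_upto_Suc)

lemma abs_regret_Suc:
  "abs_regret I (Suc t) = abs_regret I t + (if Suc t \<in> I then \<bar>inst_regret I (Suc t)\<bar> else 0)"
  unfolding abs_regret_def regC_def inst_regret_def by (rule sum_upto_Suc)

lemma weighted_regret_Suc:
  "weighted_regret I (Suc t)
    = weighted_regret I t + (if Suc t \<in> I then weight I (Suc t) * inst_regret I (Suc t) else 0)"
  unfolding weighted_regret_def by (rule sum_upto_Suc)

lemma abs_inst_regret_le_one:
  assumes "I \<in> GC" "u \<in> I" "u \<le> T"
  shows "\<bar>inst_regret I u\<bar> \<le> 1"
proof -
  have "u \<in> {1..T}"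
    using assms GC_pos by auto
  then have "0 \<le> f u (play u)" "f u (play u) \<le> 1" "0 \<le> f u (ep I u)" "f u (ep I u) \<le> 1"
    using f_range play_in_K ep_in_K[OF assms(1,2)] by auto
  then show ?thesis
    unfolding inst_regret_def by (simp add: abs_le_iff)
qed

lemma abs_regret_le_card:
  assumes "I \<in> GC" "t \<le> T"
  shows "abs_regret I t \<le> card {u \<in> I. u \<le> t}"
proof -
  have "abs_regret I t \<le> (\<Sum>u\<in>{u \<in> I. u \<le> t}. 1)"
    unfolding abs_regret_def regC_def
    using abs_inst_regret_le_one[OF assms(1)] assms(2) by (intro sum_mono) (auto simp: inst_regret_def)
  then show ?thesis
    by simp
qed

lemma Phi_regret_le:
  assumes "I \<in> GC"
  shows "t \<le> T \<Longrightarrow> Phi (regret I t) (abs_regret I t) \<le> 1 + 3 * ln (1 + abs_regret I t) + weighted_regret I t"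
proof (induction t)
  case 0
  then show ?case
    unfolding regret_def abs_regret_def weighted_regret_def regR_def regC_def GC_upto_0[OF assms]
    by (simp add: Phi_def)
next
  case (Suc t)
  show ?case
  proof (cases "Suc t \<in> I")
    case False
    then show ?thesis
      using Suc by (simp add: regret_Suc abs_regret_Suc weighted_regret_Suc)
  next
    case True
    have "Phi (regret I t + inst_regret I (Suc t)) (abs_regret I t + \<bar>inst_regret I (Suc t)\<bar>)
        - 3 * ln (1 + (abs_regret I t + \<bar>inst_regret I (Suc t)\<bar>))
      \<le> Phi (regret I t) (abs_regret I t) - 3 * ln (1 + abs_regret I t) + weight I (Suc t) * inst_regret I (Suc t)"
      unfolding weight_def diff_Suc_1 using abs_inst_regret_le_one[OF assms True Suc.prems]
      by (intro Phi_ln_step) (simp_all add: abs_regret_nonneg regret_le_abs_regret)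
    then show ?thesis
      using Suc True by (simp add: regret_Suc abs_regret_Suc weighted_regret_Suc)
  qed
qed

lemma sum_weighted_regret_nonpos:
  assumes "t \<le> T"
  shows "(\<Sum>I\<in>GC_started t. weighted_regret I t) \<le> 0"
proof -
  have "(\<Sum>I\<in>GC_started t. weighted_regret I t)
      = (\<Sum>I\<in>GC_started t. \<Sum>u\<in>{1..t}. if u \<in> I then weight I u * inst_regret I u else 0)"
  proof (rule sum.cong[OF refl])
    fix I
    assume "I \<in> GC_started t"
    then have "{u \<in> I. u \<le> t} = {u \<in> {1..t}. u \<in> I}"
      using GC_pos by (auto simp: GC_started_def)
    then show "weighted_regret I t = (\<Sum>u\<in>{1..t}. if u \<in> I then weight I u * inst_regret I u else 0)"
      unfolding weighted_regret_def by (simp only: sum.inter_filter[OF finite_atLeastAtMost])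
  qed
  also have "\<dots> = (\<Sum>u\<in>{1..t}. \<Sum>I\<in>GC_started t. if u \<in> I then weight I u * inst_regret I u else 0)"
    by (rule sum.swap)
  also have "\<dots> = (\<Sum>u\<in>{1..t}. \<Sum>I\<in>active u. weight I u * inst_regret I u)"
  proof (rule sum.cong[OF refl])
    fix u
    assume "u \<in> {1..t}"
    then have "active u = {I \<in> GC_started t. u \<in> I}"
      by (simp add: active_eq_GC_started)
    then show "(\<Sum>I\<in>GC_started t. if u \<in> I then weight I u * inst_regret I u else 0)
        = (\<Sum>I\<in>active u. weight I u * inst_regret I u)"
      by (simp only: sum.inter_filter[OF finite_GC_started])
  qed
  also have "\<dots> \<le> 0"
    using assms by (intro sum_nonpos weighted_inst_regret_nonpos) auto
  finally show ?thesis .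
qed

lemma sum_Phi_regret_le:
  assumes "t \<le> T"
  shows "(\<Sum>I\<in>GC_started t. Phi (regret I t) (abs_regret I t)) \<le> 2 * real t * (1 + 3 * ln (1 + real t))"
proof -
  have "(\<Sum>I\<in>GC_started t. Phi (regret I t) (abs_regret I t))
      \<le> (\<Sum>I\<in>GC_started t. (1 + 3 * ln (1 + real t)) + weighted_regret I t)"
  proof (rule sum_mono)
    fix I
    assume I: "I \<in> GC_started t"
    then have "I \<in> GC"
      by (simp add: GC_started_def)
    then have "abs_regret I t \<le> real t"
      using abs_regret_le_card[OF _ assms, of I] card_GC_upto_le[of I t] by linarith
    then have "ln (1 + abs_regret I t) \<le> ln (1 + real t)"
      using abs_regret_nonneg[of I t] by simp
    then show "Phi (regret I t) (abs_regret I t) \<le> (1 + 3 * ln (1 + real t)) + weighted_regret I t"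
      using Phi_regret_le[OF _ assms, of I] I by (auto simp: GC_started_def)
  qed
  also have "\<dots> \<le> real (card (GC_started t)) * (1 + 3 * ln (1 + real t))"
    using sum_weighted_regret_nonpos[OF assms] by (simp add: sum.distrib)
  also have "\<dots> \<le> 2 * real t * (1 + 3 * ln (1 + real t))"
    using card_GC_started_le[of t] by (intro mult_right_mono) auto
  finally show ?thesis .
qed

lemma regret_eq_sum: "I \<subseteq> {..t} \<Longrightarrow> regret I t = (\<Sum>u\<in>I. f u (play u)) - (\<Sum>u\<in>I. f u (ep I u))"
  unfolding regret_def regR_def by (simp add: Int_absorb2 Collect_conj_eq sum_subtractf flip: atMost_def)

lemma Phi_regret_le_bound:
  assumes J: "J \<in> GC" "J \<subseteq> {..j}" and "j \<le> T"
  shows "Phi (regret J j) (abs_regret J j) \<le> 2 * real j * (1 + 3 * ln (1 + real j))"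
proof -
  have "Min J \<in> J"
    using J GC_finite GC_nonempty by simp
  then have "J \<in> GC_started j"
    using J by (auto simp: GC_started_def)
  then have "Phi (regret J j) (abs_regret J j) \<le> (\<Sum>I\<in>GC_started j. Phi (regret I j) (abs_regret I j))"
    using finite_GC_started Phi_ge_one[OF abs_regret_nonneg]
    by (intro member_le_sum) (auto intro: order_trans[OF zero_le_one])
  also have "\<dots> \<le> 2 * real j * (1 + 3 * ln (1 + real j))"
    by (rule sum_Phi_regret_le[OF assms(3)])
  finally show ?thesis .
qed

lemma regret_le_sqrt:
  assumes J: "J \<in> GC" "J \<subseteq> {..j}" and j: "1 \<le> j" "j \<le> T"
  shows "regret J j \<le> sqrt (3 * cbound j) * real (card J) powr (1/2)"
proof (cases "regret J j \<le> 0")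
  case True
  have "0 \<le> sqrt (3 * cbound j) * real (card J) powr (1/2)"
    using cbound_ge_one[OF j(1)] by simp
  then show ?thesis
    using True by linarith
next
  case False
  define R C where "R = regret J j" and "C = abs_regret J j"
  have R: "R > 0" "R \<le> C"
    using False regret_le_abs_regret by (simp_all add: R_def C_def)
  have "exp (R^2 / (3 * C)) \<le> 2 * real j * (1 + 3 * ln (1 + real j))"
    using Phi_regret_le_bound[OF J j(2)] R by (simp add: R_def C_def Phi_def)
  then have "R^2 / (3 * C) \<le> ln (2 * real j * (1 + 3 * ln (1 + real j)))"
    by (metis exp_gt_zero exp_le_cancel_iff exp_ln order_less_le_trans)
  also have "\<dots> \<le> cbound j"
    by (rule ln_le_cbound[OF j(1)])
  finally have "R^2 \<le> 3 * C * cbound j"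
    using R by (simp add: field_simps)
  also have "\<dots> \<le> 3 * real (card J) * cbound j"
  proof -
    have "{u \<in> J. u \<le> j} = J"
      using J by auto
    then show ?thesis
      using abs_regret_le_card[OF J(1) j(2)] cbound_ge_one[OF j(1)] by (simp add: C_def)
  qed
  finally have "R \<le> sqrt (3 * real (card J) * cbound j)"
    by (rule real_le_rsqrt)
  then show ?thesis
    by (simp add: R_def powr_half_sqrt real_sqrt_mult mult_ac)
qed

end

section \<open>Blocked online gradient descent with infeasible projections\<close>

lemma sum_consecutive_blocks:
  "(\<Sum>r\<in>{a..<a + M * B}. h r) = (\<Sum>m<M. \<Sum>r\<in>{a + m * B..<a + Suc m * B}. h r)"
proof (induction M)
  case (Suc M)
  have "(\<Sum>r\<in>{a..<a + Suc M * B}. h r) = (\<Sum>r\<in>{a..<a + M * B}. h r) + (\<Sum>r\<in>{a + M * B..<a + Suc M * B}. h r)"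
    by (rule sum.atLeastLessThan_concat[symmetric]) auto
  then show ?case
    using Suc by simp
qed simp

lemma gradient_step_inner_le:
  fixes y y' z v :: "'a::real_inner"
  assumes "\<eta> > 0" "norm (y' - z) \<le> norm (y - \<eta> *\<^sub>R v - z)"
  shows "v \<bullet> (y - z) \<le> ((norm (y - z))^2 - (norm (y' - z))^2) / (2 * \<eta>) + \<eta> * (norm v)^2 / 2"
proof -
  have "(norm (y' - z))^2 \<le> (norm ((y - z) - \<eta> *\<^sub>R v))^2"
    using assms(2) by (intro power_mono) (simp_all add: algebra_simps)
  also have "\<dots> = (norm (y - z))^2 - 2 * \<eta> * (v \<bullet> (y - z)) + \<eta>^2 * (norm v)^2"
    unfolding power2_norm_eq_inner
    by (simp add: inner_diff_left inner_diff_right inner_commute power2_eq_square algebra_simps)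
  finally have "2 * \<eta> * (v \<bullet> (y - z)) \<le> (norm (y - z))^2 - (norm (y' - z))^2 + \<eta>^2 * (norm v)^2"
    by linarith
  then show ?thesis
    using assms(1) by (simp add: field_simps power2_eq_square)
qed

lemma fst_bogd_state_in_K:
  assumes projection: "\<And>I m \<epsilon> x y0. \<epsilon> > 0 \<Longrightarrow> x \<in> K \<Longrightarrow> fst (Orc I m \<epsilon> x y0) \<in> K"
    and "x0 I \<in> K" "finite I" "I \<noteq> {}"
  shows "fst (bogd_state Orc g x0 bsz I m) \<in> K"
proof -
  have "eta I powr (2/3) > 0"
    using assms(3,4) by (simp add: eta_def card_gt_0_iff)
  then show ?thesis
    using assms(2) by (induction m) (auto simp: split_beta projection)
qed

locale bogd =
  fixes K :: "'a::real_inner set" and G :: real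
    and f :: "nat \<Rightarrow> 'a \<Rightarrow> real" and g :: "nat \<Rightarrow> 'a \<Rightarrow> 'a"
    and Orc :: "nat set \<Rightarrow> nat \<Rightarrow> real \<Rightarrow> 'a \<Rightarrow> 'a \<Rightarrow> 'a \<times> 'a"
    and x0 :: "nat set \<Rightarrow> 'a" and bsz :: "nat set \<Rightarrow> nat" and J :: "nat set"
  assumes projection: "\<And>I m \<epsilon> x y0. \<epsilon> > 0 \<Longrightarrow> x \<in> K \<Longrightarrow>
      fst (Orc I m \<epsilon> x y0) \<in> K \<and> dist (fst (Orc I m \<epsilon> x y0)) (snd (Orc I m \<epsilon> x y0)) \<le> sqrt (3 * \<epsilon>)
      \<and> (\<forall>z\<in>K. dist (snd (Orc I m \<epsilon> x y0)) z \<le> dist y0 z)"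
    and x0_in_K: "x0 J \<in> K"
    and subgradient: "\<forall>t\<in>J. \<forall>x\<in>K. \<forall>y\<in>K. f t y \<ge> f t x + g t x \<bullet> (y - x)"
    and gradient_bound: "\<forall>t\<in>J. \<forall>x\<in>K. norm (g t x) \<le> G"
    and finite_J: "finite J" and J_nonempty: "J \<noteq> {}"
begin

abbreviation "\<eta> \<equiv> eta J"
abbreviation "B \<equiv> bsz J"

text \<open>\<open>point m\<close> and \<open>aux m\<close> are the paper's \<open>x\<^sub>m\<^sub>+\<^sub>1\<close> and \<open>y~\<^sub>m\<^sub>+\<^sub>1\<close>; block \<open>m\<close> is 0-based.\<close>
definition point :: "nat \<Rightarrow> 'a" where
  "point m = fst (bogd_state Orc g x0 bsz J m)"

definition aux :: "nat \<Rightarrow> 'a" where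
  "aux m = snd (bogd_state Orc g x0 bsz J m)"

definition block :: "nat \<Rightarrow> nat set" where
  "block m = {Min J + m * B ..< Min J + Suc m * B}"

definition block_gradient :: "nat \<Rightarrow> 'a" where
  "block_gradient m = (\<Sum>r\<in>block m. g r (point m))"

lemma eta_pos: "\<eta> > 0"
  using finite_J J_nonempty by (simp add: eta_def card_gt_0_iff)

lemma bogd_state_Suc:
  "bogd_state Orc g x0 bsz J (Suc m) = Orc J (Suc m) (\<eta> powr (2/3)) (point m) (aux m - \<eta> *\<^sub>R block_gradient m)"
  by (simp add: point_def aux_def block_gradient_def block_def split_beta)

lemma point_Suc: "point (Suc m) = fst (Orc J (Suc m) (\<eta> powr (2/3)) (point m) (aux m - \<eta> *\<^sub>R block_gradient m))"
  unfolding point_def[of "Suc m"] bogd_state_Suc ..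

lemma aux_Suc: "aux (Suc m) = snd (Orc J (Suc m) (\<eta> powr (2/3)) (point m) (aux m - \<eta> *\<^sub>R block_gradient m))"
  unfolding aux_def[of "Suc m"] bogd_state_Suc ..

lemma point_in_K: "point m \<in> K"
  unfolding point_def by (intro fst_bogd_state_in_K) (use projection x0_in_K finite_J J_nonempty in auto)

lemma dist_point_aux: "dist (point m) (aux m) \<le> sqrt (3 * \<eta> powr (2/3))"
proof (cases m)
  case 0
  then show ?thesis
    by (simp add: point_def aux_def)
next
  case (Suc m')
  then show ?thesis
    using projection[OF _ point_in_K, of "\<eta> powr (2/3)"] eta_pos by (simp add: point_Suc aux_Suc)
qed

lemma dist_aux_Suc_le: "z \<in> K \<Longrightarrow> dist (aux (Suc m)) z \<le> dist (aux m - \<eta> *\<^sub>R block_gradient m) z"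
  using projection[OF _ point_in_K, of "\<eta> powr (2/3)"] eta_pos by (simp add: aux_Suc)

lemma expert_play_block:
  assumes "r \<in> block m"
  shows "expert_play Orc g x0 bsz J r = point m"
proof -
  have "B * m \<le> r - Min J" "r - Min J < B * Suc m"
    using assms by (auto simp: block_def algebra_simps)
  then have "(r - Min J) div B = m"
    by (intro div_nat_eqI) auto
  then show ?thesis
    by (simp add: expert_play_def point_def)
qed

lemma G_nonneg: "G \<ge> 0"
  using gradient_bound J_nonempty x0_in_K by (meson all_not_in_conv norm_ge_zero order_trans)

lemma block_regret_le:
  assumes "block m \<subseteq> J" "z \<in> K"
  shows "(\<Sum>r\<in>block m. f r (point m) - f r z)
    \<le> ((norm (aux m - z))^2 - (norm (aux (Suc m) - z))^2) / (2 * \<eta>)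
      + \<eta> * (B * G)^2 / 2 + B * G * sqrt (3 * \<eta> powr (2/3))"
proof -
  define v where "v = block_gradient m"
  have norm_v: "norm v \<le> B * G"
  proof -
    have "norm v \<le> (\<Sum>r\<in>block m. norm (g r (point m)))"
      unfolding v_def block_gradient_def by (rule norm_sum)
    also have "\<dots> \<le> (\<Sum>r\<in>block m. G)"
      using assms(1) gradient_bound point_in_K by (intro sum_mono) blast
    finally show ?thesis
      by (simp add: block_def)
  qed
  have "(\<Sum>r\<in>block m. f r (point m) - f r z) \<le> (\<Sum>r\<in>block m. g r (point m) \<bullet> (point m - z))"
  proof (rule sum_mono)
    fix r
    assume "r \<in> block m"
    then have "f r z \<ge> f r (point m) + g r (point m) \<bullet> (z - point m)"
      using assms subgradient point_in_K by blast
    then show "f r (point m) - f r z \<le> g r (point m) \<bullet> (point m - z)"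
      by (simp add: inner_diff_right)
  qed
  also have "\<dots> = v \<bullet> (point m - z)"
    by (simp add: v_def block_gradient_def inner_sum_left)
  also have "\<dots> = v \<bullet> (aux m - z) + v \<bullet> (point m - aux m)"
    by (simp add: inner_diff_right)
  also have "v \<bullet> (point m - aux m) \<le> norm v * norm (point m - aux m)"
    by (rule norm_cauchy_schwarz)
  also have "\<dots> \<le> B * G * sqrt (3 * \<eta> powr (2/3))"
    using norm_v dist_point_aux[of m] G_nonneg by (intro mult_mono) (simp_all add: dist_norm)
  also have "v \<bullet> (aux m - z)
      \<le> ((norm (aux m - z))^2 - (norm (aux (Suc m) - z))^2) / (2 * \<eta>) + \<eta> * (norm v)^2 / 2"
    using eta_pos dist_aux_Suc_le[OF assms(2), of m]
    by (intro gradient_step_inner_le) (simp_all add: v_def dist_norm)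
  also have "\<eta> * (norm v)^2 / 2 \<le> \<eta> * (B * G)^2 / 2"
    using norm_v eta_pos by (intro divide_right_mono mult_left_mono power_mono) auto
  finally show ?thesis
    by simp
qed

lemma regret_le:
  assumes J: "J = {Min J ..< Min J + M * B}" and "z \<in> K"
  shows "(\<Sum>u\<in>J. f u (expert_play Orc g x0 bsz J u) - f u z)
    \<le> (norm (x0 J - z))^2 / (2 * \<eta>) + M * (\<eta> * (B * G)^2 / 2 + B * G * sqrt (3 * \<eta> powr (2/3)))"
proof -
  define D where "D m = (norm (aux m - z))^2" for m
  define c where "c = \<eta> * (B * G)^2 / 2 + B * G * sqrt (3 * \<eta> powr (2/3))"
  have "(\<Sum>u\<in>J. f u (expert_play Orc g x0 bsz J u) - f u z)
      = (\<Sum>m<M. \<Sum>r\<in>block m. f r (expert_play Orc g x0 bsz J r) - f r z)"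
    by (subst J) (simp add: sum_consecutive_blocks block_def)
  also have "\<dots> = (\<Sum>m<M. \<Sum>r\<in>block m. f r (point m) - f r z)"
    by (simp add: expert_play_block)
  also have "\<dots> \<le> (\<Sum>m<M. (D m - D (Suc m)) / (2 * \<eta>) + c)"
  proof (rule sum_mono)
    fix m
    assume "m \<in> {..<M}"
    then have "block m \<subseteq> J"
      by (subst J) (auto simp: block_def intro: order_trans[OF _ mult_le_mono1[of "Suc m" M]])
    then show "(\<Sum>r\<in>block m. f r (point m) - f r z) \<le> (D m - D (Suc m)) / (2 * \<eta>) + c"
      using block_regret_le assms(2) by (simp add: D_def c_def add.assoc)
  qed
  also have "\<dots> = (\<Sum>m<M. D m - D (Suc m)) / (2 * \<eta>) + M * c"
    by (simp add: sum.distrib sum_divide_distrib)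
  also have "\<dots> = (D 0 - D M) / (2 * \<eta>) + M * c"
    by (simp only: sum_lessThan_telescope')
  also have "\<dots> \<le> D 0 / (2 * \<eta>) + M * c"
    using eta_pos by (simp add: D_def divide_right_mono)
  finally show ?thesis
    by (simp add: D_def c_def aux_def)
qed

lemma block_size_sqrt:
  assumes "real B = \<eta> powr (-2/3)"
  shows "real B = real (card J) powr (1/2)" "B * B = card J"
proof -
  show B: "real B = real (card J) powr (1/2)"
    using assms by (simp add: eta_def powr_powr)
  have "real (card J) > 0"
    using finite_J J_nonempty by (simp add: card_gt_0_iff)
  then have "real (B * B) = real (card J)"
    unfolding of_nat_mult B by (simp flip: powr_add)
  then show "B * B = card J"
    by (simp only: of_nat_eq_iff)
qed

lemma regret_le_tuned:
  assumes K: "K \<subseteq> cball 0 R" and B: "real B = \<eta> powr (-2/3)" and J: "J = {i..j}" and z: "z \<in> K"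
  shows "(\<Sum>u\<in>J. f u (expert_play Orc g x0 bsz J u) - f u z)
    \<le> (sqrt 3 * G + 7/4 * (2 * R)^2 + 1/2 * G^2) * real (card J) powr (3/4)"
proof -
  define n P where "n = card J" and "P = real n powr (3/4)"
  note B_sqrt = block_size_sqrt(1)[OF B, folded n_def]
  have "Min J = i" "n = j + 1 - i"
    using J J_nonempty by (auto simp: n_def intro!: Min_eqI)
  then have blocks: "J = {Min J ..< Min J + B * B}"
    using J J_nonempty block_size_sqrt(2)[OF B] by (auto simp: n_def)
  have "norm (x0 J) \<le> R" "norm z \<le> R"
    using K x0_in_K z by (auto simp: subset_iff dist_norm)
  then have "norm (x0 J - z) \<le> 2 * R"
    using norm_triangle_ineq4[of "x0 J" z] by linarith
  then have "(norm (x0 J - z))^2 / (2 * \<eta>) \<le> (2 * R)^2 / (2 * \<eta>)"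
    using eta_pos by (intro divide_right_mono power_mono) auto
  also have "\<dots> = 1/2 * (2 * R)^2 * P"
    by (simp add: P_def eta_def n_def powr_minus_divide)
  finally have diameter: "(norm (x0 J - z))^2 / (2 * \<eta>) \<le> 1/2 * (2 * R)^2 * P" .
  have "real B * real B * real B * \<eta> = real n powr (1/2 + 1/2 + 1/2 + - (3/4))"
    unfolding B_sqrt powr_add by (simp add: eta_def n_def)
  then have gradient_error: "B * (\<eta> * (B * G)^2 / 2) = 1/2 * G^2 * P"
    by (simp add: P_def power2_eq_square algebra_simps)
  have "sqrt (3 * \<eta> powr (2/3)) = sqrt 3 * real n powr (-1/4)"
    by (simp add: eta_def n_def real_sqrt_mult powr_powr flip: powr_half_sqrt)
  moreover have "real B * real B * real n powr (-1/4) = real n powr (1/2 + 1/2 + - (1/4))"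
    unfolding B_sqrt powr_add by simp
  ultimately have projection_error: "B * (B * G * sqrt (3 * \<eta> powr (2/3))) = sqrt 3 * G * P"
    by (simp add: P_def algebra_simps)
  have "(\<Sum>u\<in>J. f u (expert_play Orc g x0 bsz J u) - f u z)
      \<le> 1/2 * (2 * R)^2 * P + (1/2 * G^2 * P + sqrt 3 * G * P)"
    using regret_le[OF blocks z] diameter gradient_error projection_error by (simp add: distrib_left)
  also have "\<dots> \<le> (sqrt 3 * G + 7/4 * (2 * R)^2 + 1/2 * G^2) * P"
    by (simp add: P_def algebra_simps)
  finally show ?thesis
    by (simp add: P_def n_def)
qed

end

lemma diff_INF_le:
  fixes h :: "'a \<Rightarrow> real"
  assumes "K \<noteq> {}" "\<And>z. z \<in> K \<Longrightarrow> a - h z \<le> b"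
  shows "a - (INF z\<in>K. h z) \<le> b"
proof -
  have "a - b \<le> (INF z\<in>K. h z)"
    using assms by (intro cINF_greatest) (auto simp: algebra_simps)
  then show ?thesis
    by simp
qed

theorem mainTheorem7:
  fixes K :: "'a::euclidean_space set" and R G :: real and T i j :: nat and J :: "nat set"
    and f :: "nat \<Rightarrow> 'a \<Rightarrow> real" and g :: "nat \<Rightarrow> 'a \<Rightarrow> 'a"
    and Orc :: "nat set \<Rightarrow> nat \<Rightarrow> real \<Rightarrow> 'a \<Rightarrow> 'a \<Rightarrow> 'a \<times> 'a"
    and x0 :: "nat set \<Rightarrow> 'a" and bsz :: "nat set \<Rightarrow> nat"
  assumes A1: "convex K" "compact K" "0 \<in> K" "K \<subseteq> cball 0 R"
    and A2: "\<forall>t\<in>{1..T}. G-lipschitz_on K (f t)"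
      "\<forall>t\<in>{1..T}. \<forall>x\<in>K. norm (g t x) \<le> G"
    and A3: "\<forall>t\<in>{1..T}. convex_on K (f t)"
      "\<forall>t\<in>{1..T}. \<forall>x\<in>K. \<forall>y\<in>K. f t y \<ge> f t x + g t x \<bullet> (y - x)"
    and A4: "\<forall>t\<in>{1..T}. \<forall>x\<in>K. 0 \<le> f t x \<and> f t x \<le> 1"
    and IPspec: "\<forall>I m \<epsilon> x y0. \<epsilon> > 0 \<and> x \<in> K \<longrightarrow>
       (case Orc I m \<epsilon> x y0 of (x', y') \<Rightarrow>
          x' \<in> K \<and> y' \<in> cball 0 R \<and> dist x' y' \<le> sqrt (3 * \<epsilon>) \<and> (\<forall>z\<in>K. dist y' z \<le> dist y0 z))"
    and start: "\<forall>I\<in>GC. x0 I \<in> K"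
    and blocks: "\<forall>I\<in>GC. bsz I \<ge> 1"
    and blockJ: "real (bsz J) = eta J powr (-2/3)"
    and J: "J \<in> GC" "J = {i..j}" "j \<le> T"
  shows "(\<Sum>u\<in>J. f u (pola_play f (expert_play Orc g x0 bsz) u)) - (INF x\<in>K. \<Sum>u\<in>J. f u x)
         \<le> sqrt (3 * cbound j) * real (card J) powr (1/2)
           + (sqrt 3 * G + 7/4 * (2 * R)^2 + 1/2 * G^2) * real (card J) powr (3/4)"
proof -
  define ep where "ep = expert_play Orc g x0 bsz"
  have projection: "\<And>I m \<epsilon> x y0. \<epsilon> > 0 \<Longrightarrow> x \<in> K \<Longrightarrow>
      fst (Orc I m \<epsilon> x y0) \<in> K \<and> dist (fst (Orc I m \<epsilon> x y0)) (snd (Orc I m \<epsilon> x y0)) \<le> sqrt (3 * \<epsilon>)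
      \<and> (\<forall>z\<in>K. dist (snd (Orc I m \<epsilon> x y0)) z \<le> dist y0 z)"
    using IPspec by (auto simp: split_beta)
  have "j \<in> J"
    using J GC_nonempty by fastforce
  then have J_sub: "J \<subseteq> {1..T}" "J \<subseteq> {..j}" and "1 \<le> j"
    using J GC_pos by auto
  interpret pola K T f ep
    using A1 A3 A4 start projection
    by unfold_locales (auto simp: ep_def expert_play_def intro!: fst_bogd_state_in_K GC_finite GC_nonempty)
  interpret bogd K G f g Orc x0 bsz J
    using projection start A2 A3 J J_sub GC_finite GC_nonempty by unfold_locales blast+
  have meta: "(\<Sum>u\<in>J. f u (pola_play f ep u)) - (\<Sum>u\<in>J. f u (ep J u))
      \<le> sqrt (3 * cbound j) * real (card J) powr (1/2)"
    using regret_le_sqrt[OF J(1) J_sub(2) \<open>1 \<le> j\<close> J(3)] regret_eq_sum[OF J_sub(2)] by (simp add: play_def)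
  show ?thesis
    unfolding ep_def[symmetric] using A1(3) meta regret_le_tuned[OF A1(4) blockJ J(2)]
    by (intro diff_INF_le) (fastforce simp: ep_def sum_subtractf)+
qed

end
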